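(* Fix $s,b\ge1$, let $\{a_i\}$ be the $(s,b)$-Generacci sequence, and let $p_{n,k}$ denote the number of integers in $[0,a_{nb+1})$ whose $(s,b)$-Generacci legal decomposition contains exactly $k$ summands. Then for all $k\ge1$ and $n\ge1+(k-1)(s+1)$, \[p_{n,k}=b^k\binom{n-s(k-1)}{k}.\]
   Context: Fix integers $s,b\ge1$. For an increasing sequence of positive integers $\{a_i\}_{i\ge1}$ define bins $\mathcal{B}_n=\{a_{b(n-1)+1},\dots,a_{bn}\}$ for $n\ge1$, $\mathcal{B}_j=\emptyset$ for $j\le 0$. A decomposition $m=a_{\ell_1}+\dots+a_{\ell_k}$ with $a_{\ell_1}>\dots>a_{\ell_k}$ is an $(s,b)$-Generacci legal decomposition if $\{a_{\ell_i},a_{\ell_{i+1}}\}\not\subset\mathcal{B}_{j-s}\cup\dots\cup\mathcal{B}_j$ for all $i,j$. The $(s,b)$-Generacci sequence is the increasing sequence in which each $a_i$ is the smallest positive integer with no legal decomposition using $a_1,\dots,a_{i-1}$; every nonnegative integer has a unique legal decomposition. *)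

theory Defs
  imports Main
begin

text \<open>Sequences are indexed from 1: a :: nat \<Rightarrow> nat, the value a 0 is irrelevant.\<close>

definition gbin :: "(nat \<Rightarrow> nat) \<Rightarrow> nat \<Rightarrow> int \<Rightarrow> nat set" where
  "gbin a b j = (if j \<ge> 1 then {a i | i. b * (nat j - 1) + 1 \<le> i \<and> i \<le> b * nat j} else {})"

text \<open>A decomposition of m is given by the list of indices [l_1, ..., l_k] of its summands,
  with a_{l_1} > ... > a_{l_k}.\<close>
definition legal_decomp :: "nat \<Rightarrow> nat \<Rightarrow> (nat \<Rightarrow> nat) \<Rightarrow> nat \<Rightarrow> nat list \<Rightarrow> bool" where
  "legal_decomp s b a m L \<longleftrightarrow>
     (\<forall>l\<in>set L. l \<ge> 1) \<and>
     sorted_wrt (\<lambda>x y. a x > a y) L \<and>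
     (\<Sum>l\<leftarrow>L. a l) = m \<and>
     (\<forall>i. Suc i < length L \<longrightarrow>
        (\<forall>j::int. \<not> ({a (L ! i), a (L ! Suc i)} \<subseteq> (\<Union>t\<in>{j - int s..j}. gbin a b t))))"

definition is_generacci :: "nat \<Rightarrow> nat \<Rightarrow> (nat \<Rightarrow> nat) \<Rightarrow> bool" where
  "is_generacci s b a \<longleftrightarrow>
     strict_mono_on {1..} a \<and>
     (\<forall>i\<ge>1. a i = (LEAST x. x > 0 \<and>
        \<not> (\<exists>L. set L \<subseteq> {1..<i} \<and> legal_decomp s b a x L)))"

definition p_count :: "nat \<Rightarrow> nat \<Rightarrow> (nat \<Rightarrow> nat) \<Rightarrow> nat \<Rightarrow> nat \<Rightarrow> nat" where
  "p_count s b a n k = card {m. m < a (n * b + 1) \<and>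
      (\<exists>L. legal_decomp s b a m L \<and> length L = k)}"

end

theory Submission
  imports Defs
begin

text \<open>The summand a_l lies in bin number bin_index b l = \<lceil>l / b\<rceil>, so two summands a_x > a_y may be
  consecutive in a legal decomposition iff bin_index b y + s < bin_index b x. Reading the greedy
  definition of the sequence through this description, induction on i shows that the sums of
  such bin-separated index lists below i enumerate [0, a_i) exactly once each. Hence p_{n,k}
  counts bin-separated lists of k indices from the first n bins; splitting on whether the
  largest index lies in bin n + 1 gives p_{n+1,k+1} = p_{n,k+1} + b p_{n-s,k}, which the
  binomial expression satisfies by Pascal's rule.\<close>

definition bin_index :: "nat \<Rightarrow> nat \<Rightarrow> nat" where
  "bin_index b l = (l + b - 1) div b"

lemma bin_index_le_iff:
  assumes "b \<ge> 1" shows "bin_index b l \<le> q \<longleftrightarrow> l \<le> b * q"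
proof -
  have "bin_index b l \<le> q \<longleftrightarrow> l + b - 1 < b * Suc q"
    unfolding bin_index_def using assms
    by (simp add: less_Suc_eq_le[symmetric] div_less_iff_less_mult mult.commute)
  also have "\<dots> \<longleftrightarrow> l \<le> b * q" using assms by auto
  finally show ?thesis .
qed

lemma bin_index_pos: "b \<ge> 1 \<Longrightarrow> l \<ge> 1 \<Longrightarrow> bin_index b l \<ge> 1"
  using bin_index_le_iff[of b l 0] by auto

lemma bin_index_mono: "l \<le> l' \<Longrightarrow> bin_index b l \<le> bin_index b l'"
  unfolding bin_index_def by (simp add: div_le_mono)

lemma bin_index_eqI:
  assumes "b \<ge> 1" "b * q + 1 \<le> l" "l \<le> b * q + b"
  shows "bin_index b l = Suc q"
  using bin_index_le_iff[of b l q] bin_index_le_iff[of b l "Suc q"] assms by auto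

lemma gbin_mem_iff:
  assumes "b \<ge> 1" "inj_on a {1..}" "l \<ge> 1"
  shows "a l \<in> gbin a b t \<longleftrightarrow> t = int (bin_index b l)"
proof
  assume "a l \<in> gbin a b t"
  then obtain i where t: "t \<ge> 1" and i: "b * (nat t - 1) + 1 \<le> i" "i \<le> b * nat t" "a i = a l"
    unfolding gbin_def by (auto split: if_splits)
  have "i = l" using assms(2,3) i by (auto dest: inj_onD)
  with i t assms(1) have "bin_index b l = Suc (nat t - 1)"
    by (intro bin_index_eqI) (auto simp: algebra_simps)
  with t show "t = int (bin_index b l)" by simp
next
  assume t: "t = int (bin_index b l)"
  have "bin_index b l \<ge> 1" using bin_index_pos assms by simp
  moreover have "b * (bin_index b l - 1) < l" "l \<le> b * bin_index b l"
    using bin_index_le_iff[of b l "bin_index b l - 1"] bin_index_le_iff[of b l "bin_index b l"]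
      assms \<open>bin_index b l \<ge> 1\<close> by auto
  ultimately show "a l \<in> gbin a b t" unfolding gbin_def t by auto
qed

lemma share_window_iff:
  assumes "b \<ge> 1" "inj_on a {1..}" "x \<ge> 1" "y \<ge> 1"
  shows "(\<exists>j. {a x, a y} \<subseteq> (\<Union>t\<in>{j - int s..j}. gbin a b t))
    \<longleftrightarrow> bin_index b x \<le> bin_index b y + s \<and> bin_index b y \<le> bin_index b x + s"
proof -
  have "(\<exists>j. {a x, a y} \<subseteq> (\<Union>t\<in>{j - int s..j}. gbin a b t)) \<longleftrightarrow>
      (\<exists>j. j - int s \<le> int (bin_index b x) \<and> int (bin_index b x) \<le> j
         \<and> j - int s \<le> int (bin_index b y) \<and> int (bin_index b y) \<le> j)"
    using gbin_mem_iff[OF assms(1,2,3)] gbin_mem_iff[OF assms(1,2,4)] by auto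
  also have "\<dots> \<longleftrightarrow> bin_index b x \<le> bin_index b y + s \<and> bin_index b y \<le> bin_index b x + s"
    by (auto intro!: exI[of _ "int (max (bin_index b x) (bin_index b y))"])
  finally show ?thesis .
qed

definition bin_separated :: "nat \<Rightarrow> nat \<Rightarrow> nat list \<Rightarrow> bool" where
  "bin_separated s b L \<longleftrightarrow>
     (\<forall>l\<in>set L. 1 \<le> l) \<and> sorted_wrt (\<lambda>x y. bin_index b y + s < bin_index b x) L"

lemma legal_pair_iff:
  assumes "b \<ge> 1" "strict_mono_on {1..} a" "x \<ge> 1" "y \<ge> 1"
  shows "(a y < a x \<and> (\<forall>j. \<not> {a x, a y} \<subseteq> (\<Union>t\<in>{j - int s..j}. gbin a b t)))
    \<longleftrightarrow> bin_index b y + s < bin_index b x"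
proof -
  have "a y < a x \<longleftrightarrow> y < x" using strict_mono_on_less[OF assms(2)] assms(3,4) by simp
  moreover have "y < x \<Longrightarrow> bin_index b y \<le> bin_index b x" by (simp add: bin_index_mono)
  moreover have "bin_index b y + s < bin_index b x \<Longrightarrow> y < x"
    using bin_index_mono[of x y b] by linarith
  moreover have window: "(\<forall>j. \<not> {a x, a y} \<subseteq> (\<Union>t\<in>{j - int s..j}. gbin a b t))
    \<longleftrightarrow> \<not> (bin_index b x \<le> bin_index b y + s \<and> bin_index b y \<le> bin_index b x + s)"
    using share_window_iff[OF assms(1) strict_mono_on_imp_inj_on[OF assms(2)] assms(3,4)] by blast
  ultimately show ?thesis unfolding window by linarith
qed

lemma legal_decomp_iff:
  assumes "b \<ge> 1" "strict_mono_on {1..} a"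
  shows "legal_decomp s b a m L \<longleftrightarrow> bin_separated s b L \<and> (\<Sum>l\<leftarrow>L. a l) = m"
proof -
  have pair: "(a (L ! Suc i) < a (L ! i) \<and>
      (\<forall>j. \<not> {a (L ! i), a (L ! Suc i)} \<subseteq> (\<Union>t\<in>{j - int s..j}. gbin a b t)))
    \<longleftrightarrow> bin_index b (L ! Suc i) + s < bin_index b (L ! i)"
    if "\<forall>l\<in>set L. 1 \<le> l" "Suc i < length L" for i
    using legal_pair_iff[OF assms] that by simp
  have "transp (\<lambda>x y. a y < a x)" "transp (\<lambda>x y. bin_index b y + s < bin_index b x)"
    by (auto simp: transp_def)
  note consecutive = this[THEN sorted_wrt_iff_nth_Suc_transp]
  show ?thesis
    unfolding legal_decomp_def bin_separated_def consecutive using pair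
    by (intro iffI; elim conjE; intro conjI allI impI; metis)
qed

text \<open>The last index of bin B_{bin_index b l - s - 1}; by bin_gap_iff, the indices allowed to follow
  l in a legal decomposition are exactly 1, ..., max_follower s b l.\<close>
definition max_follower :: "nat \<Rightarrow> nat \<Rightarrow> nat \<Rightarrow> nat" where
  "max_follower s b l = b * (bin_index b l - s - 1)"

lemma bin_gap_iff:
  assumes "b \<ge> 1" "y \<ge> 1"
  shows "bin_index b y + s < bin_index b l \<longleftrightarrow> y \<le> max_follower s b l"
proof -
  have "bin_index b y + s < bin_index b l \<longleftrightarrow> bin_index b y \<le> bin_index b l - s - 1"
    using bin_index_pos[OF assms] by linarith
  also have "\<dots> \<longleftrightarrow> y \<le> max_follower s b l"
    unfolding max_follower_def using bin_index_le_iff[OF assms(1)] by blast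
  finally show ?thesis .
qed

lemma max_follower_less:
  assumes "b \<ge> 1" "l \<ge> 1" shows "max_follower s b l < l"
proof -
  have "max_follower s b l \<le> b * (bin_index b l - 1)"
    unfolding max_follower_def by (intro mult_le_mono2) simp
  also have "\<not> bin_index b l \<le> bin_index b l - 1" using bin_index_pos[OF assms] by simp
  then have "b * (bin_index b l - 1) < l" using bin_index_le_iff[OF assms(1)] not_le by blast
  finally show ?thesis .
qed

lemma bin_separated_Nil [simp]: "bin_separated s b []"
  by (simp add: bin_separated_def)

lemma bin_separated_pos: "bin_separated s b L \<Longrightarrow> l \<in> set L \<Longrightarrow> 1 \<le> l"
  by (simp add: bin_separated_def)

lemma bin_separated_Cons:
  assumes "b \<ge> 1"
  shows "bin_separated s b (x # L) \<longleftrightarrow>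
    1 \<le> x \<and> (\<forall>y\<in>set L. y \<le> max_follower s b x) \<and> bin_separated s b L"
  using bin_gap_iff[OF assms] by (auto simp: bin_separated_def)

definition separated_below :: "nat \<Rightarrow> nat \<Rightarrow> nat \<Rightarrow> nat list set" where
  "separated_below s b i = {L. bin_separated s b L \<and> set L \<subseteq> {1..<i}}"

lemma Nil_mem_separated_below [simp]: "[] \<in> separated_below s b i"
  by (simp add: separated_below_def)

lemma Cons_mem_separated_below_iff:
  assumes "b \<ge> 1"
  shows "h # L \<in> separated_below s b i \<longleftrightarrow>
    1 \<le> h \<and> h < i \<and> L \<in> separated_below s b (Suc (max_follower s b h))"
  using max_follower_less[OF assms, of h s] bin_separated_pos[of s b L]
  by (fastforce simp: separated_below_def bin_separated_Cons[OF assms] less_Suc_eq_le)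

lemma separated_below_Suc:
  assumes "b \<ge> 1" "i \<ge> 1"
  shows "separated_below s b (Suc i) =
    separated_below s b i \<union> Cons i ` separated_below s b (Suc (max_follower s b i))"
proof -
  have "L \<in> separated_below s b (Suc i) \<longleftrightarrow>
      L \<in> separated_below s b i \<or>
      (\<exists>L'. L = i # L' \<and> L' \<in> separated_below s b (Suc (max_follower s b i)))"
    for L
    using assms(2) by (cases L) (auto simp: Cons_mem_separated_below_iff[OF assms(1)] less_Suc_eq)
  then show ?thesis by (simp add: set_eq_iff image_iff) metis
qed

lemma generacci_eqI:
  assumes "b \<ge> 1" "is_generacci s b a" "i \<ge> 1" "N \<ge> 1"
    and "(\<lambda>L. \<Sum>l\<leftarrow>L. a l) ` separated_below s b i = {0..<N}"
  shows "a i = N"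
proof -
  have sm: "strict_mono_on {1..} a"
    and a_i: "a i = (LEAST x. x > 0 \<and> \<not> (\<exists>L. set L \<subseteq> {1..<i} \<and> legal_decomp s b a x L))"
    using assms(2,3) unfolding is_generacci_def by auto
  have "(\<exists>L. set L \<subseteq> {1..<i} \<and> legal_decomp s b a x L)
      \<longleftrightarrow> x \<in> (\<lambda>L. \<Sum>l\<leftarrow>L. a l) ` separated_below s b i" for x
    unfolding legal_decomp_iff[OF assms(1) sm] separated_below_def by blast
  with assms(5) have decomposable:
    "(\<exists>L. set L \<subseteq> {1..<i} \<and> legal_decomp s b a x L) \<longleftrightarrow> x < N" for x
    by simp
  have "a i = (LEAST x. x > 0 \<and> \<not> x < N)" unfolding a_i decomposable ..
  also have "\<dots> = N" using assms(4) by (intro Least_equality) auto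
  finally show ?thesis .
qed

lemma bij_betw_Cons_sum:
  fixes a :: "'i \<Rightarrow> 'b::cancel_comm_monoid_add"
  assumes "bij_betw (\<lambda>L. \<Sum>l\<leftarrow>L. a l) X Y"
  shows "bij_betw (\<lambda>L. \<Sum>l\<leftarrow>L. a l) (Cons i ` X) ((+) (a i) ` Y)"
proof -
  have "bij_betw (Cons i) X (Cons i ` X)" by (simp add: inj_on_imp_bij_betw)
  moreover have "bij_betw ((+) (a i) \<circ> (\<lambda>L. \<Sum>l\<leftarrow>L. a l)) X ((+) (a i) ` Y)"
    using assms by (rule bij_betw_trans) (simp add: inj_on_imp_bij_betw inj_on_def)
  ultimately show ?thesis by (simp add: bij_betw_comp_iff comp_def)
qed

text \<open>Splitting on whether a_j is the leading summand yields, together with the bijection, the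
  recurrence a_{j+1} = a_j + a_{max_follower s b j + 1}.\<close>
lemma generacci_sum_bij:
  assumes "b \<ge> 1" "is_generacci s b a" "i \<ge> 1"
  shows "bij_betw (\<lambda>L. \<Sum>l\<leftarrow>L. a l) (separated_below s b i) {0..<a i}"
  using assms(3)
proof (induction i rule: less_induct)
  case (less i)
  let ?S = "\<lambda>L. \<Sum>l\<leftarrow>L. a l"
  show ?case
  proof (cases "i = 1")
    case True
    have "separated_below s b 1 = {[]}" by (auto simp: separated_below_def)
    moreover from this have "a 1 = 1" using generacci_eqI[OF assms(1,2)] by simp
    ultimately show ?thesis using True by simp
  next
    case False
    then obtain j where i: "i = Suc j" and "j \<ge> 1" using less.prems by (cases i) auto
    define f where "f = Suc (max_follower s b j)"
    have "f \<le> j" using max_follower_less[OF assms(1) \<open>j \<ge> 1\<close>, of s] by (simp add: f_def)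
    have low: "bij_betw ?S (separated_below s b j) {0..<a j}"
      using less.IH \<open>j \<ge> 1\<close> i by simp
    have high: "bij_betw ?S (Cons j ` separated_below s b f) {a j..<a j + a f}"
      using bij_betw_Cons_sum[OF less.IH[of f]] \<open>f \<le> j\<close> i by (simp add: f_def add.commute)
    have "bij_betw ?S (separated_below s b i) ({0..<a j} \<union> {a j..<a j + a f})"
      unfolding i separated_below_Suc[OF assms(1) \<open>j \<ge> 1\<close>] f_def[symmetric]
      by (rule bij_betw_combine[OF low high]) auto
    moreover have "{0..<a j} \<union> {a j..<a j + a f} = {0..<a j + a f}" by auto
    moreover have "a j \<ge> 1"
      using bij_betw_apply[OF low, of "[]"] by simp
    ultimately have "bij_betw ?S (separated_below s b i) {0..<a j + a f}"
      and "a i = a j + a f"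
      using generacci_eqI[OF assms(1,2) less.prems] by (simp_all add: bij_betw_def)
    then show ?thesis by simp
  qed
qed

definition separated_in_bins :: "nat \<Rightarrow> nat \<Rightarrow> nat \<Rightarrow> nat \<Rightarrow> nat list set" where
  "separated_in_bins s b n k = {L \<in> separated_below s b (n * b + 1). length L = k}"

lemma finite_separated_in_bins: "finite (separated_in_bins s b n k)"
proof -
  have "separated_in_bins s b n k \<subseteq> {L. set L \<subseteq> {1..<n * b + 1} \<and> length L = k}"
    by (auto simp: separated_in_bins_def separated_below_def)
  then show ?thesis using finite_lists_length_eq[of "{1..<n * b + 1}" k] finite_subset by auto
qed

lemma separated_in_bins_Suc:
  assumes "b \<ge> 1"
  shows "separated_in_bins s b (Suc m) (Suc k) = separated_in_bins s b m (Suc k)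
    \<union> (\<lambda>(h, L). h # L) ` ({m * b + 1..m * b + b} \<times> separated_in_bins s b (m - s) k)"
proof -
  have "L \<in> separated_in_bins s b (Suc m) (Suc k) \<longleftrightarrow>
    L \<in> separated_in_bins s b m (Suc k) \<or>
    (\<exists>h L'. L = h # L' \<and> h \<in> {m * b + 1..m * b + b} \<and>
      L' \<in> separated_in_bins s b (m - s) k)"
    for L
  proof (cases L)
    case (Cons h L')
    show ?thesis
    proof (cases "h \<le> m * b")
      case True
      then show ?thesis
        using Cons by (auto simp: separated_in_bins_def Cons_mem_separated_below_iff[OF assms])
    next
      case False
      then have "Suc (max_follower s b h) = (m - s) * b + 1" if "h \<le> m * b + b"
        using bin_index_eqI[OF assms, of m h] that by (simp add: max_follower_def algebra_simps)
      with False show ?thesis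
        using Cons by (auto simp: separated_in_bins_def Cons_mem_separated_below_iff[OF assms])
    qed
  qed (simp add: separated_in_bins_def)
  then show ?thesis by (simp add: set_eq_iff image_iff Bex_def) metis
qed

lemma card_separated_in_bins_Suc:
  assumes "b \<ge> 1"
  shows "card (separated_in_bins s b (Suc m) (Suc k)) =
    card (separated_in_bins s b m (Suc k)) + b * card (separated_in_bins s b (m - s) k)"
proof -
  let ?top = "(\<lambda>(h, L). h # L) ` ({m * b + 1..m * b + b} \<times> separated_in_bins s b (m - s) k)"
  have "separated_in_bins s b m (Suc k) \<inter> ?top = {}"
    by (auto simp: separated_in_bins_def separated_below_def)
  moreover have "card ?top = b * card (separated_in_bins s b (m - s) k)"
    by (subst card_image) (auto simp: inj_on_def card_cartesian_product)
  ultimately show ?thesis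
    unfolding separated_in_bins_Suc[OF assms]
    by (simp add: card_Un_disjoint finite_separated_in_bins)
qed

lemma choose_shifted_Suc:
  "(Suc m - s * k) choose Suc k = ((m - s * k) choose Suc k) + ((m - s - s * (k - 1)) choose k)"
proof (cases "k = 0")
  case False
  then have "m - s - s * (k - 1) = m - s * k"
    by (cases k) (simp_all add: diff_diff_left)
  moreover have "(Suc m - s * k) choose Suc k = ((m - s * k) choose Suc k) + ((m - s * k) choose k)"
    using False by (cases "s * k \<le> m") (simp_all add: Suc_diff_le)
  ultimately show ?thesis by simp
qed simp

lemma card_separated_in_bins:
  assumes "b \<ge> 1"
  shows "card (separated_in_bins s b n k) = b ^ k * ((n - s * (k - 1)) choose k)"
proof (induction n arbitrary: k rule: less_induct)
  case (less n)
  show ?case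
  proof (cases "n = 0 \<or> k = 0")
    case True
    have "separated_in_bins s b n 0 = {[]}" "separated_in_bins s b 0 (Suc k') = {}" for k'
      by (auto simp: separated_in_bins_def separated_below_def)
    with True show ?thesis by (cases k) auto
  next
    case False
    then obtain m k' where n: "n = Suc m" and k: "k = Suc k'"
      by (metis not0_implies_Suc)
    have "card (separated_in_bins s b n k) =
      b ^ Suc k' * ((m - s * k') choose Suc k') + b * (b ^ k' * ((m - s - s * (k' - 1)) choose k'))"
      unfolding n k card_separated_in_bins_Suc[OF assms] using less.IH n by simp
    also have "\<dots> = b ^ Suc k' * ((Suc m - s * k') choose Suc k')"
      unfolding choose_shifted_Suc[of m s k'] by (simp add: algebra_simps)
    finally show ?thesis using n k by simp
  qed
qed

lemma legal_mem_separated_below: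
  assumes "b \<ge> 1" "strict_mono_on {1..} a" "legal_decomp s b a m L" "N \<ge> 1" "m < a N"
  shows "L \<in> separated_below s b N"
proof -
  have sep: "bin_separated s b L" and sum: "(\<Sum>l\<leftarrow>L. a l) = m"
    using assms(3) legal_decomp_iff[OF assms(1,2)] by auto
  have "l < N" if "l \<in> set L" for l
  proof (rule ccontr)
    assume "\<not> l < N"
    then have "a N \<le> a l"
      using strict_mono_on_leD[OF assms(2), of N l] assms(4) by simp
    also have "a l \<le> m" using that sum member_le_sum_list[of "a l" "map a L"] by simp
    finally show False using assms(5) by simp
  qed
  then show ?thesis using sep bin_separated_pos[OF sep] by (auto simp: separated_below_def)
qed

lemma p_count_eq_card:
  assumes "b \<ge> 1" "is_generacci s b a"
  shows "p_count s b a n k = card (separated_in_bins s b n k)"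
proof -
  let ?S = "\<lambda>L. \<Sum>l\<leftarrow>L. a l" and ?N = "n * b + 1"
  have sm: "strict_mono_on {1..} a" using assms(2) by (simp add: is_generacci_def)
  have bij: "bij_betw ?S (separated_below s b ?N) {0..<a ?N}"
    using generacci_sum_bij[OF assms] by simp
  have sub: "separated_in_bins s b n k \<subseteq> separated_below s b ?N"
    by (auto simp: separated_in_bins_def)
  have "{m. m < a ?N \<and> (\<exists>L. legal_decomp s b a m L \<and> length L = k)} =
    ?S ` separated_in_bins s b n k"
  proof (intro equalityI subsetI)
    fix m assume "m \<in> {m. m < a ?N \<and> (\<exists>L. legal_decomp s b a m L \<and> length L = k)}"
    then obtain L where "m < a ?N" "legal_decomp s b a m L" "length L = k" by auto
    then show "m \<in> ?S ` separated_in_bins s b n k"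
      using legal_mem_separated_below[OF assms(1) sm, where N = ?N] legal_decomp_iff[OF assms(1) sm]
      by (force simp: separated_in_bins_def)
  next
    fix m assume "m \<in> ?S ` separated_in_bins s b n k"
    then obtain L where L: "L \<in> separated_in_bins s b n k" "m = ?S L" by blast
    then have "m < a ?N" using bij_betw_apply[OF bij] sub by auto
    with L show "m \<in> {m. m < a ?N \<and> (\<exists>L. legal_decomp s b a m L \<and> length L = k)}"
      using legal_decomp_iff[OF assms(1) sm] by (auto simp: separated_in_bins_def separated_below_def)
  qed
  then have "p_count s b a n k = card (?S ` separated_in_bins s b n k)"
    by (simp add: p_count_def)
  also have "\<dots> = card (separated_in_bins s b n k)"
    using bij sub by (intro card_image) (auto simp: bij_betw_def intro: inj_on_subset)
  finally show ?thesis .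
qed

theorem propositionC1:
  fixes s b n k :: nat and a :: "nat \<Rightarrow> nat"
  assumes "s \<ge> 1" and "b \<ge> 1"
    and "is_generacci s b a"
    and "k \<ge> 1" and "n \<ge> 1 + (k - 1) * (s + 1)"
  shows "p_count s b a n k = b ^ k * ((n - s * (k - 1)) choose k)"
  using p_count_eq_card[OF assms(2,3)] card_separated_in_bins[OF assms(2)] by simp

end
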